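(* Let $G$ be a concurrent game structure with a set $F\subseteq S$ of safe states, let $v$ be a valuation, and let $(\overline{G}_v,\overline{F})=\mathrm{TB}(G,v,F)$. Let $\overline{A}$ be the set of almost-sure winning states in $\overline{G}_v$ for $\mathrm{Safe}(\overline{F})$, and $\overline{\pi}_1$ a pure memoryless almost-sure winning strategy from $\overline{A}$ in $\overline{G}_v$. Let $\pi_1$ be a memoryless player-1 strategy in $G$ such that for every $s\in\overline{A}\cap S$, if $\overline{\pi}_1(s)=(s,A,B)$ then $\pi_1(s)\in\mathrm{OptSel}(v,s)$, $\mathrm{supp}(\pi_1(s))=A$ and $\mathrm{CountOpt}(v,s,\pi_1(s))=B$. Let $\pi_2$ be a pure memoryless player-2 strategy. If $\pi_2(s)\in\mathrm{CountOpt}(v,s,\pi_1(s))$ for all $s\in\overline{A}\cap S$, then $\Pr_s^{\pi_1,\pi_2}(\mathrm{Safe}(F))=1$ for all $s\in\overline{A}\cap S$.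
   Context: Concurrent game structure $G=(S,M,\Gamma_1,\Gamma_2,\delta)$: finite states, finite moves, nonempty move sets $\Gamma_i(s)$, $\delta(s,a_1,a_2)\in\mathrm{Distr}(S)$ (simultaneous independent moves), $\mathrm{Dest}(s,a_1,a_2)=\mathrm{supp}\,\delta(s,a_1,a_2)$. A selector at $s$ for player $i$ is a distribution on $\Gamma_i(s)$; memoryless strategies play a fixed selector at each state; pure means point masses. $\mathrm{Safe}(F)$: plays staying in $F$ forever. A valuation is $v:S\to[0,1]$. $\mathrm{Pre}_{\xi_1,\xi_2}(v)(s)=\sum_{a,b}\sum_tv(t)\delta(s,a,b)(t)\xi_1(s)(a)\xi_2(s)(b)$; $\mathrm{Pre}_{\xi_1,b}$ with player 2 playing $b$; $\mathrm{Pre}_{1:\xi_1}(v)(s)=\inf_{\xi_2}\mathrm{Pre}_{\xi_1,\xi_2}(v)(s)$; $\mathrm{Pre}_1(v)(s)=\sup_{\xi_1}\mathrm{Pre}_{1:\xi_1}(v)(s)$. $\mathrm{OptSel}(v,s)=\{\xi_1:\mathrm{Pre}_{1:\xi_1}(v)(s)=\mathrm{Pre}_1(v)(s)\}$; $\mathrm{CountOpt}(v,s,\xi_1)=\{b\in\Gamma_2(s):\mathrm{Pre}_{\xi_1,b}(v)(s)=\mathrm{Pre}_1(v)(s)\}$; $\mathrm{OptSelCount}(v,s)$ = pairs $(A,B)$ such that some $\xi_1\in\mathrm{OptSel}(v,s)$ has support $A$ and $\mathrm{CountOpt}(v,s,\xi_1)=B$. $\mathrm{TB}(G,v,F)=(\overline{G}_v,\overline{F})$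 is the turn-based stochastic game (player $i$ chooses the successor at its states; random states choose uniformly among successors) with player-1 states $S$, player-2 states $(s,A,B)$ for $(A,B)\in\mathrm{OptSelCount}(v,s)$, random states $(s,A,b)$ for such $(A,B)$ and $b\in B$, edges $s\to(s,A,B)$, $(s,A,B)\to(s,A,b)$ for $b\in B$, $(s,A,b)\to t$ for $t\in\bigcup_{a\in A}\mathrm{Dest}(s,a,b)$; $\overline{F}=F\cup\{(s,A,B):s\in F\}\cup\{(s,A,b):s\in F\}$. A state is almost-sure winning for $\mathrm{Safe}(\overline{F})$ if player 1 has a strategy ensuring $\mathrm{Safe}(\overline{F})$ with probability 1 from it against all player-2 strategies; an almost-sure winning strategy from $\overline{A}$ does so from every state of $\overline{A}$. *)

theory Defs
  imports "HOL-Probability.Probability"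
begin

definition cgs ::
  "'s set \<Rightarrow> 'm set \<Rightarrow> ('s \<Rightarrow> 'm set) \<Rightarrow> ('s \<Rightarrow> 'm set) \<Rightarrow> ('s \<Rightarrow> 'm \<Rightarrow> 'm \<Rightarrow> 's pmf) \<Rightarrow> bool"
where
  "cgs S M \<Gamma>1 \<Gamma>2 \<delta> \<longleftrightarrow> finite S \<and> finite M \<and>
     (\<forall>s\<in>S. \<Gamma>1 s \<noteq> {} \<and> \<Gamma>1 s \<subseteq> M \<and> \<Gamma>2 s \<noteq> {} \<and> \<Gamma>2 s \<subseteq> M) \<and>
     (\<forall>s\<in>S. \<forall>a\<in>\<Gamma>1 s. \<forall>b\<in>\<Gamma>2 s. set_pmf (\<delta> s a b) \<subseteq> S)"

definition Dest :: "('s \<Rightarrow> 'm \<Rightarrow> 'm \<Rightarrow> 's pmf) \<Rightarrow> 's \<Rightarrow> 'm \<Rightarrow> 'm \<Rightarrow> 's set" where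
  "Dest \<delta> s a b = set_pmf (\<delta> s a b)"

definition sel :: "('s \<Rightarrow> 'm set) \<Rightarrow> 's \<Rightarrow> 'm pmf set" where
  "sel \<Gamma> s = {p. set_pmf p \<subseteq> \<Gamma> s}"

definition Pre2 ::
  "'s set \<Rightarrow> ('s \<Rightarrow> 'm set) \<Rightarrow> ('s \<Rightarrow> 'm set) \<Rightarrow> ('s \<Rightarrow> 'm \<Rightarrow> 'm \<Rightarrow> 's pmf)
    \<Rightarrow> ('s \<Rightarrow> real) \<Rightarrow> 's \<Rightarrow> 'm pmf \<Rightarrow> 'm pmf \<Rightarrow> real"
where
  "Pre2 S \<Gamma>1 \<Gamma>2 \<delta> v s p q =
     (\<Sum>a\<in>\<Gamma>1 s. \<Sum>b\<in>\<Gamma>2 s. \<Sum>t\<in>S. v t * pmf (\<delta> s a b) t * pmf p a * pmf q b)"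

definition Pre1sel ::
  "'s set \<Rightarrow> ('s \<Rightarrow> 'm set) \<Rightarrow> ('s \<Rightarrow> 'm set) \<Rightarrow> ('s \<Rightarrow> 'm \<Rightarrow> 'm \<Rightarrow> 's pmf)
    \<Rightarrow> ('s \<Rightarrow> real) \<Rightarrow> 's \<Rightarrow> 'm pmf \<Rightarrow> real"
where
  "Pre1sel S \<Gamma>1 \<Gamma>2 \<delta> v s p = (INF q \<in> sel \<Gamma>2 s. Pre2 S \<Gamma>1 \<Gamma>2 \<delta> v s p q)"

definition Pre1 ::
  "'s set \<Rightarrow> ('s \<Rightarrow> 'm set) \<Rightarrow> ('s \<Rightarrow> 'm set) \<Rightarrow> ('s \<Rightarrow> 'm \<Rightarrow> 'm \<Rightarrow> 's pmf)
    \<Rightarrow> ('s \<Rightarrow> real) \<Rightarrow> 's \<Rightarrow> real"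
where
  "Pre1 S \<Gamma>1 \<Gamma>2 \<delta> v s = (SUP p \<in> sel \<Gamma>1 s. Pre1sel S \<Gamma>1 \<Gamma>2 \<delta> v s p)"

definition OptSel ::
  "'s set \<Rightarrow> ('s \<Rightarrow> 'm set) \<Rightarrow> ('s \<Rightarrow> 'm set) \<Rightarrow> ('s \<Rightarrow> 'm \<Rightarrow> 'm \<Rightarrow> 's pmf)
    \<Rightarrow> ('s \<Rightarrow> real) \<Rightarrow> 's \<Rightarrow> 'm pmf set"
where
  "OptSel S \<Gamma>1 \<Gamma>2 \<delta> v s =
     {p \<in> sel \<Gamma>1 s. Pre1sel S \<Gamma>1 \<Gamma>2 \<delta> v s p = Pre1 S \<Gamma>1 \<Gamma>2 \<delta> v s}"

definition CountOpt ::
  "'s set \<Rightarrow> ('s \<Rightarrow> 'm set) \<Rightarrow> ('s \<Rightarrow> 'm set) \<Rightarrow> ('s \<Rightarrow> 'm \<Rightarrow> 'm \<Rightarrow> 's pmf)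
    \<Rightarrow> ('s \<Rightarrow> real) \<Rightarrow> 's \<Rightarrow> 'm pmf \<Rightarrow> 'm set"
where
  "CountOpt S \<Gamma>1 \<Gamma>2 \<delta> v s p =
     {b \<in> \<Gamma>2 s. Pre2 S \<Gamma>1 \<Gamma>2 \<delta> v s p (return_pmf b) = Pre1 S \<Gamma>1 \<Gamma>2 \<delta> v s}"

definition OptSelCount ::
  "'s set \<Rightarrow> ('s \<Rightarrow> 'm set) \<Rightarrow> ('s \<Rightarrow> 'm set) \<Rightarrow> ('s \<Rightarrow> 'm \<Rightarrow> 'm \<Rightarrow> 's pmf)
    \<Rightarrow> ('s \<Rightarrow> real) \<Rightarrow> 's \<Rightarrow> ('m set \<times> 'm set) set"
where
  "OptSelCount S \<Gamma>1 \<Gamma>2 \<delta> v s =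
     {(A, B). \<exists>p \<in> OptSel S \<Gamma>1 \<Gamma>2 \<delta> v s. set_pmf p = A \<and> CountOpt S \<Gamma>1 \<Gamma>2 \<delta> v s p = B}"

text \<open>Probability of Safe(F) in G under memoryless strategies pi1 (randomized) and
 pi2 (pure): the plays form a Markov chain; the probability of staying in F forever
 is the infimum (= limit, by continuity from above) of the probabilities of staying
 in F during the first n steps.\<close>

fun safe_steps_cgs ::
  "('s \<Rightarrow> 'm \<Rightarrow> 'm \<Rightarrow> 's pmf) \<Rightarrow> 's set \<Rightarrow> ('s \<Rightarrow> 'm pmf) \<Rightarrow> ('s \<Rightarrow> 'm) \<Rightarrow> nat \<Rightarrow> 's \<Rightarrow> real"
where
  "safe_steps_cgs \<delta> F \<pi>1 \<pi>2 0 s = (if s \<in> F then 1 else 0)"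
| "safe_steps_cgs \<delta> F \<pi>1 \<pi>2 (Suc n) s =
     (if s \<in> F then
        measure_pmf.expectation (bind_pmf (\<pi>1 s) (\<lambda>a. \<delta> s a (\<pi>2 s)))
          (safe_steps_cgs \<delta> F \<pi>1 \<pi>2 n)
      else 0)"

definition prob_safe_cgs ::
  "('s \<Rightarrow> 'm \<Rightarrow> 'm \<Rightarrow> 's pmf) \<Rightarrow> 's set \<Rightarrow> ('s \<Rightarrow> 'm pmf) \<Rightarrow> ('s \<Rightarrow> 'm) \<Rightarrow> 's \<Rightarrow> real"
where
  "prob_safe_cgs \<delta> F \<pi>1 \<pi>2 s = (INF n. safe_steps_cgs \<delta> F \<pi>1 \<pi>2 n s)"

datatype ('s, 'm) tbv =
    P1 's
  | P2 's "'m set" "'m set"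
  | Rnd 's "'m set" 'm

definition TB_states ::
  "'s set \<Rightarrow> ('s \<Rightarrow> 'm set) \<Rightarrow> ('s \<Rightarrow> 'm set) \<Rightarrow> ('s \<Rightarrow> 'm \<Rightarrow> 'm \<Rightarrow> 's pmf)
    \<Rightarrow> ('s \<Rightarrow> real) \<Rightarrow> ('s, 'm) tbv set"
where
  "TB_states S \<Gamma>1 \<Gamma>2 \<delta> v =
     P1 ` S
   \<union> {P2 s A B | s A B. s \<in> S \<and> (A, B) \<in> OptSelCount S \<Gamma>1 \<Gamma>2 \<delta> v s}
   \<union> {Rnd s A b | s A B b. s \<in> S \<and> (A, B) \<in> OptSelCount S \<Gamma>1 \<Gamma>2 \<delta> v s \<and> b \<in> B}"

fun TB_succ ::
  "'s set \<Rightarrow> ('s \<Rightarrow> 'm set) \<Rightarrow> ('s \<Rightarrow> 'm set) \<Rightarrow> ('s \<Rightarrow> 'm \<Rightarrow> 'm \<Rightarrow> 's pmf)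
    \<Rightarrow> ('s \<Rightarrow> real) \<Rightarrow> ('s, 'm) tbv \<Rightarrow> ('s, 'm) tbv set"
where
  "TB_succ S \<Gamma>1 \<Gamma>2 \<delta> v (P1 s) =
     {P2 s A B | A B. (A, B) \<in> OptSelCount S \<Gamma>1 \<Gamma>2 \<delta> v s}"
| "TB_succ S \<Gamma>1 \<Gamma>2 \<delta> v (P2 s A B) = {Rnd s A b | b. b \<in> B}"
| "TB_succ S \<Gamma>1 \<Gamma>2 \<delta> v (Rnd s A b) = P1 ` (\<Union>a\<in>A. Dest \<delta> s a b)"

definition TB_safe :: "'s set \<Rightarrow> ('s, 'm) tbv set" where
  "TB_safe F = P1 ` F \<union> {P2 s A B | s A B. s \<in> F} \<union> {Rnd s A b | s A b. s \<in> F}"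

fun is_P1 :: "('s, 'm) tbv \<Rightarrow> bool" where
  "is_P1 (P1 _) = True" | "is_P1 _ = False"

fun is_P2 :: "('s, 'm) tbv \<Rightarrow> bool" where
  "is_P2 (P2 _ _ _) = True" | "is_P2 _ = False"

text \<open>General (history-dependent, randomized) strategies in the turn-based game:
 a history is a nonempty list of vertices, the strategy chooses a distribution over
 the successors of the last vertex whenever that vertex belongs to the player.\<close>

definition tb_strategy ::
  "('s, 'm) tbv set \<Rightarrow> (('s, 'm) tbv \<Rightarrow> bool) \<Rightarrow> (('s, 'm) tbv \<Rightarrow> ('s, 'm) tbv set)
     \<Rightarrow> (('s, 'm) tbv list \<Rightarrow> ('s, 'm) tbv pmf) \<Rightarrow> bool"
where
  "tb_strategy V owner succ \<sigma> \<longleftrightarrow>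
     (\<forall>h. h \<noteq> [] \<and> last h \<in> V \<and> owner (last h) \<longrightarrow> set_pmf (\<sigma> h) \<subseteq> succ (last h))"

definition tb_next ::
  "(('s, 'm) tbv \<Rightarrow> ('s, 'm) tbv set) \<Rightarrow> (('s, 'm) tbv list \<Rightarrow> ('s, 'm) tbv pmf)
     \<Rightarrow> (('s, 'm) tbv list \<Rightarrow> ('s, 'm) tbv pmf) \<Rightarrow> ('s, 'm) tbv list \<Rightarrow> ('s, 'm) tbv pmf"
where
  "tb_next succ \<sigma>1 \<sigma>2 h =
     (case last h of
        P1 _ \<Rightarrow> \<sigma>1 h
      | P2 _ _ _ \<Rightarrow> \<sigma>2 h
      | Rnd _ _ _ \<Rightarrow> pmf_of_set (succ (last h)))"

fun tb_safe_steps ::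
  "(('s, 'm) tbv \<Rightarrow> ('s, 'm) tbv set) \<Rightarrow> ('s, 'm) tbv set
     \<Rightarrow> (('s, 'm) tbv list \<Rightarrow> ('s, 'm) tbv pmf) \<Rightarrow> (('s, 'm) tbv list \<Rightarrow> ('s, 'm) tbv pmf)
     \<Rightarrow> nat \<Rightarrow> ('s, 'm) tbv list \<Rightarrow> real"
where
  "tb_safe_steps succ Fb \<sigma>1 \<sigma>2 0 h = (if last h \<in> Fb then 1 else 0)"
| "tb_safe_steps succ Fb \<sigma>1 \<sigma>2 (Suc n) h =
     (if last h \<in> Fb then
        measure_pmf.expectation (tb_next succ \<sigma>1 \<sigma>2 h)
          (\<lambda>t. tb_safe_steps succ Fb \<sigma>1 \<sigma>2 n (h @ [t]))
      else 0)"

definition tb_prob_safe ::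
  "(('s, 'm) tbv \<Rightarrow> ('s, 'm) tbv set) \<Rightarrow> ('s, 'm) tbv set
     \<Rightarrow> (('s, 'm) tbv list \<Rightarrow> ('s, 'm) tbv pmf) \<Rightarrow> (('s, 'm) tbv list \<Rightarrow> ('s, 'm) tbv pmf)
     \<Rightarrow> ('s, 'm) tbv \<Rightarrow> real"
where
  "tb_prob_safe succ Fb \<sigma>1 \<sigma>2 x = (INF n. tb_safe_steps succ Fb \<sigma>1 \<sigma>2 n [x])"

definition tb_as_winning_from ::
  "('s, 'm) tbv set \<Rightarrow> (('s, 'm) tbv \<Rightarrow> ('s, 'm) tbv set) \<Rightarrow> ('s, 'm) tbv set
     \<Rightarrow> (('s, 'm) tbv list \<Rightarrow> ('s, 'm) tbv pmf) \<Rightarrow> ('s, 'm) tbv set \<Rightarrow> bool"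
where
  "tb_as_winning_from V succ Fb \<sigma>1 X \<longleftrightarrow>
     tb_strategy V is_P1 succ \<sigma>1 \<and>
     (\<forall>\<sigma>2. tb_strategy V is_P2 succ \<sigma>2 \<longrightarrow> (\<forall>x\<in>X. tb_prob_safe succ Fb \<sigma>1 \<sigma>2 x = 1))"

definition tb_as_win_set ::
  "('s, 'm) tbv set \<Rightarrow> (('s, 'm) tbv \<Rightarrow> ('s, 'm) tbv set) \<Rightarrow> ('s, 'm) tbv set \<Rightarrow> ('s, 'm) tbv set"
where
  "tb_as_win_set V succ Fb = {x \<in> V. \<exists>\<sigma>1. tb_as_winning_from V succ Fb \<sigma>1 {x}}"

definition pure_memoryless :: "(('s, 'm) tbv \<Rightarrow> ('s, 'm) tbv) \<Rightarrow> ('s, 'm) tbv list \<Rightarrow> ('s, 'm) tbv pmf"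
where
  "pure_memoryless f h = return_pmf (f (last h))"

end

theory Submission
  imports Defs
begin

text \<open>Let C be the set of states s with P1 s almost-sure winning in the turn-based game.
  Each such s lies in F, and every state the concurrent game can reach from s in one step
  under \<pi>1, \<pi>2 is again in C: the move \<pi>2 s is one of the counter-optimal moves B offered
  at the player-2 vertex chosen by the winning strategy at P1 s, so the turn-based play can
  pass through the random vertex (s, supp (\<pi>1 s), \<pi>2 s), whose successors are exactly these
  states; almost-sure winning from P1 s forces the uniform average of the winning
  probabilities of those successors to be 1, hence each of them is almost-sure winning.
  A subset of F closed under the induced Markov chain is never left.\<close>

lemma measure_pmf_expectation_eq_1:
  fixes f :: "'a \<Rightarrow> real"
  assumes "\<And>x. x \<in> set_pmf p \<Longrightarrow> f x = 1"
  shows "measure_pmf.expectation p f = 1"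
proof -
  have "measure_pmf.expectation p f = measure_pmf.expectation p (\<lambda>_. 1)"
    by (intro integral_cong_AE) (use assms in \<open>auto simp: AE_measure_pmf_iff\<close>)
  then show ?thesis by simp
qed

lemma measure_pmf_expectation_eq_1_imp:
  fixes f :: "'a \<Rightarrow> real"
  assumes bounds: "\<And>x. 0 \<le> f x" "\<And>x. f x \<le> 1"
    and one: "measure_pmf.expectation p f = 1" and x: "x \<in> set_pmf p"
  shows "f x = 1"
proof -
  have int: "integrable (measure_pmf p) f"
    by (rule measure_pmf.integrable_const_bound[where B=1]) (use bounds in auto)
  have "measure_pmf.expectation p (\<lambda>y. 1 - f y) = 0"
    using one int by (simp add: Bochner_Integration.integral_diff)
  then have "AE y in measure_pmf p. 1 - f y = 0"
    using int bounds by (subst (asm) integral_nonneg_eq_0_iff_AE) auto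
  then show ?thesis using x by (simp add: AE_measure_pmf_iff)
qed

lemma Pre2_pure_response:
  assumes "finite (\<Gamma>2 s)" "b \<in> \<Gamma>2 s"
  shows "Pre2 S \<Gamma>1 \<Gamma>2 \<delta> v s p (return_pmf b) =
           (\<Sum>a\<in>\<Gamma>1 s. \<Sum>t\<in>S. v t * pmf (\<delta> s a b) t * pmf p a)"
proof -
  have "Pre2 S \<Gamma>1 \<Gamma>2 \<delta> v s p (return_pmf b) =
          (\<Sum>a\<in>\<Gamma>1 s. \<Sum>b'\<in>\<Gamma>2 s. if b' = b then \<Sum>t\<in>S. v t * pmf (\<delta> s a b) t * pmf p a else 0)"
    unfolding Pre2_def by (intro sum.cong refl) (auto simp: pmf_return sum_distrib_right)
  then show ?thesis using assms by simp
qed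

lemma Pre2_mixed_response:
  assumes "finite (\<Gamma>2 s)"
  shows "Pre2 S \<Gamma>1 \<Gamma>2 \<delta> v s p q =
           (\<Sum>b\<in>\<Gamma>2 s. Pre2 S \<Gamma>1 \<Gamma>2 \<delta> v s p (return_pmf b) * pmf q b)"
proof -
  have "Pre2 S \<Gamma>1 \<Gamma>2 \<delta> v s p q =
          (\<Sum>b\<in>\<Gamma>2 s. (\<Sum>a\<in>\<Gamma>1 s. \<Sum>t\<in>S. v t * pmf (\<delta> s a b) t * pmf p a) * pmf q b)"
    unfolding Pre2_def by (subst sum.swap) (simp add: sum_distrib_right)
  also have "\<dots> = (\<Sum>b\<in>\<Gamma>2 s. Pre2 S \<Gamma>1 \<Gamma>2 \<delta> v s p (return_pmf b) * pmf q b)"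
    by (intro sum.cong refl) (simp add: Pre2_pure_response assms)
  finally show ?thesis .
qed

lemma Pre1sel_attained_by_pure_response:
  assumes fin: "finite (\<Gamma>2 s)" and ne: "\<Gamma>2 s \<noteq> {}"
  obtains b where "b \<in> \<Gamma>2 s" "Pre1sel S \<Gamma>1 \<Gamma>2 \<delta> v s p = Pre2 S \<Gamma>1 \<Gamma>2 \<delta> v s p (return_pmf b)"
proof -
  let ?d = "\<lambda>b. Pre2 S \<Gamma>1 \<Gamma>2 \<delta> v s p (return_pmf b)"
  obtain b0 where b0: "b0 \<in> \<Gamma>2 s" "\<And>b. b \<in> \<Gamma>2 s \<Longrightarrow> ?d b0 \<le> ?d b"
    using ex_min_if_finite[of "?d ` \<Gamma>2 s"] fin ne by (force simp: not_less)
  have "?d b0 \<le> Pre2 S \<Gamma>1 \<Gamma>2 \<delta> v s p q" if "q \<in> sel \<Gamma>2 s" for q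
  proof -
    have "?d b0 = (\<Sum>b\<in>\<Gamma>2 s. ?d b0 * pmf q b)"
      using sum_pmf_eq_1[OF fin, of q] that by (simp add: sel_def sum_distrib_left[symmetric])
    also have "\<dots> \<le> (\<Sum>b\<in>\<Gamma>2 s. ?d b * pmf q b)"
      by (intro sum_mono mult_right_mono) (auto simp: b0)
    also have "\<dots> = Pre2 S \<Gamma>1 \<Gamma>2 \<delta> v s p q"
      by (rule Pre2_mixed_response[symmetric]) (rule fin)
    finally show ?thesis .
  qed
  moreover have "return_pmf b0 \<in> sel \<Gamma>2 s" using b0 by (simp add: sel_def)
  ultimately have "Pre1sel S \<Gamma>1 \<Gamma>2 \<delta> v s p = ?d b0"
    unfolding Pre1sel_def by (intro cInf_eq_minimum) auto
  with b0 that show ?thesis by blast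
qed

lemma CountOpt_nonempty:
  assumes "finite (\<Gamma>2 s)" "\<Gamma>2 s \<noteq> {}" "p \<in> OptSel S \<Gamma>1 \<Gamma>2 \<delta> v s"
  shows "CountOpt S \<Gamma>1 \<Gamma>2 \<delta> v s p \<noteq> {}"
proof -
  obtain b where "b \<in> \<Gamma>2 s" "Pre1sel S \<Gamma>1 \<Gamma>2 \<delta> v s p = Pre2 S \<Gamma>1 \<Gamma>2 \<delta> v s p (return_pmf b)"
    using Pre1sel_attained_by_pure_response[of \<Gamma>2 s] assms(1,2) by blast
  with assms(3) have "b \<in> CountOpt S \<Gamma>1 \<Gamma>2 \<delta> v s p"
    by (simp add: OptSel_def CountOpt_def)
  then show ?thesis by blast
qed

lemma TB_succ_P2_nonempty:
  assumes "cgs S M \<Gamma>1 \<Gamma>2 \<delta>" "x \<in> TB_states S \<Gamma>1 \<Gamma>2 \<delta> v" "is_P2 x"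
  shows "TB_succ S \<Gamma>1 \<Gamma>2 \<delta> v x \<noteq> {}"
proof -
  obtain s A B where x: "x = P2 s A B" and s: "s \<in> S"
    and AB: "(A, B) \<in> OptSelCount S \<Gamma>1 \<Gamma>2 \<delta> v s"
    using assms(2,3) by (cases x) (auto simp: TB_states_def)
  from AB obtain p where p: "p \<in> OptSel S \<Gamma>1 \<Gamma>2 \<delta> v s" "CountOpt S \<Gamma>1 \<Gamma>2 \<delta> v s p = B"
    by (auto simp: OptSelCount_def)
  have "finite (\<Gamma>2 s)" "\<Gamma>2 s \<noteq> {}"
    using assms(1) s finite_subset by (auto simp: cgs_def)
  then have "B \<noteq> {}" using CountOpt_nonempty[of \<Gamma>2 s] p by blast
  then show ?thesis using x by auto
qed

lemma TB_succ_Rnd_subset: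
  assumes "cgs S M \<Gamma>1 \<Gamma>2 \<delta>" "s \<in> S" "A \<subseteq> \<Gamma>1 s" "b \<in> \<Gamma>2 s"
  shows "TB_succ S \<Gamma>1 \<Gamma>2 \<delta> v (Rnd s A b) \<subseteq> P1 ` S"
proof
  fix x assume "x \<in> TB_succ S \<Gamma>1 \<Gamma>2 \<delta> v (Rnd s A b)"
  then obtain a t where a: "a \<in> A" and t: "t \<in> set_pmf (\<delta> s a b)" and x: "x = P1 t"
    by (auto simp: Dest_def)
  have "set_pmf (\<delta> s a b) \<subseteq> S"
    using assms a unfolding cgs_def by blast
  with t x show "x \<in> P1 ` S" by blast
qed

lemma prob_safe_cgs_eq_1_on_closed_set:
  assumes "C \<subseteq> F"
    and closed: "\<And>s. s \<in> C \<Longrightarrow> set_pmf (bind_pmf (\<pi>1 s) (\<lambda>a. \<delta> s a (\<pi>2 s))) \<subseteq> C"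
    and "s \<in> C"
  shows "prob_safe_cgs \<delta> F \<pi>1 \<pi>2 s = 1"
proof -
  have "safe_steps_cgs \<delta> F \<pi>1 \<pi>2 n s = 1" if "s \<in> C" for n s
    using that
  proof (induction n arbitrary: s)
    case 0
    then show ?case using assms(1) by auto
  next
    case (Suc n)
    have "measure_pmf.expectation (bind_pmf (\<pi>1 s) (\<lambda>a. \<delta> s a (\<pi>2 s)))
            (safe_steps_cgs \<delta> F \<pi>1 \<pi>2 n) = 1"
      by (rule measure_pmf_expectation_eq_1) (use Suc.IH closed[OF Suc.prems] in blast)
    then show ?case using Suc.prems assms(1) by auto
  qed
  then show ?thesis using assms(3) by (simp add: prob_safe_cgs_def)
qed

lemma tb_safe_steps_bounds:
  "0 \<le> tb_safe_steps succ Fb \<sigma>1 \<sigma>2 n h \<and> tb_safe_steps succ Fb \<sigma>1 \<sigma>2 n h \<le> 1"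
proof (induction n arbitrary: h)
  case 0
  then show ?case by simp
next
  case (Suc n)
  let ?f = "\<lambda>t. tb_safe_steps succ Fb \<sigma>1 \<sigma>2 n (h @ [t])"
  have "integrable (measure_pmf (tb_next succ \<sigma>1 \<sigma>2 h)) ?f"
    by (rule measure_pmf.integrable_const_bound[where B=1]) (use Suc in auto)
  then show ?case
    using Suc by (auto intro!: integral_nonneg measure_pmf.integral_le_const)
qed

lemma tb_safe_steps_eq_1_if_prob_safe:
  assumes "tb_prob_safe succ Fb \<sigma>1 \<sigma>2 x = 1"
  shows "tb_safe_steps succ Fb \<sigma>1 \<sigma>2 n [x] = 1"
proof -
  have "(INF n. tb_safe_steps succ Fb \<sigma>1 \<sigma>2 n [x]) \<le> tb_safe_steps succ Fb \<sigma>1 \<sigma>2 n [x]"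
    by (rule cINF_lower) (auto intro!: bdd_belowI[where m=0] simp: tb_safe_steps_bounds)
  then show ?thesis
    using assms tb_safe_steps_bounds[of succ Fb \<sigma>1 \<sigma>2 n "[x]"] by (simp add: tb_prob_safe_def)
qed

lemma tb_safe_steps_append_prefix:
  assumes "\<And>h. h \<noteq> [] \<Longrightarrow> \<sigma>1' (pre @ h) = \<sigma>1 h"
    and "\<And>h. h \<noteq> [] \<Longrightarrow> \<sigma>2' (pre @ h) = \<sigma>2 h"
    and "h \<noteq> []"
  shows "tb_safe_steps succ Fb \<sigma>1' \<sigma>2' n (pre @ h) = tb_safe_steps succ Fb \<sigma>1 \<sigma>2 n h"
  using assms(3)
proof (induction n arbitrary: h)
  case 0
  then show ?case by simp
next
  case (Suc n)
  have "tb_next succ \<sigma>1' \<sigma>2' (pre @ h) = tb_next succ \<sigma>1 \<sigma>2 h"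
    using Suc.prems assms(1,2) by (auto simp: tb_next_def split: tbv.split)
  then show ?case using Suc by simp
qed

lemma tb_strategy_exists:
  assumes "\<And>x. x \<in> V \<Longrightarrow> owner x \<Longrightarrow> succ x \<noteq> {}"
  shows "\<exists>\<sigma>. tb_strategy V owner succ \<sigma>"
proof
  show "tb_strategy V owner succ (\<lambda>h. return_pmf (SOME y. y \<in> succ (last h)))"
    using assms by (auto simp: tb_strategy_def some_in_eq)
qed

lemma tb_as_winning_from_imp_safe:
  assumes "tb_as_winning_from V succ Fb \<sigma>1 X" "x \<in> X" "tb_strategy V is_P2 succ \<sigma>2"
  shows "x \<in> Fb"
proof -
  have "tb_prob_safe succ Fb \<sigma>1 \<sigma>2 x = 1"
    using assms by (simp add: tb_as_winning_from_def)
  from tb_safe_steps_eq_1_if_prob_safe[OF this, of 0] show ?thesis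
    by (simp split: if_splits)
qed

text \<open>Given a player-2 strategy to be played from t, player 2 may first lead the play
  from P1 s to the random vertex and then play that strategy from the successor drawn there.\<close>

lemma tb_as_win_set_closed_random_successor:
  fixes V Fb :: "('s, 'm) tbv set" and succ :: "('s, 'm) tbv \<Rightarrow> ('s, 'm) tbv set"
    and f :: "('s, 'm) tbv \<Rightarrow> ('s, 'm) tbv"
  defines "W \<equiv> tb_as_win_set V succ Fb"
  assumes win: "tb_as_winning_from V succ Fb (pure_memoryless f) W"
    and sW: "P1 s \<in> W" and f: "f (P1 s) = P2 s A B"
    and move2: "Rnd s A b \<in> succ (P2 s A B)"
    and fin: "finite (succ (Rnd s A b))"
    and t: "t \<in> succ (Rnd s A b)" "t \<in> V"
  shows "t \<in> W"
proof -
  let ?\<sigma>1 = "pure_memoryless f"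
  let ?T = "succ (Rnd s A b)"
  have "tb_prob_safe succ Fb ?\<sigma>1 \<sigma>2' t = 1" if \<sigma>2': "tb_strategy V is_P2 succ \<sigma>2'" for \<sigma>2'
  proof -
    define pre where "pre = [P1 s, P2 s A B, Rnd s A b]"
    define \<sigma>2 where "\<sigma>2 h = (if 3 < length h \<and> take 3 h = pre then \<sigma>2' (drop 3 h)
        else if h = [P1 s, P2 s A B] then return_pmf (Rnd s A b) else \<sigma>2' h)" for h
    have \<sigma>2: "tb_strategy V is_P2 succ \<sigma>2"
      unfolding tb_strategy_def
    proof (intro allI impI)
      fix h :: "('s, 'm) tbv list"
      assume h: "h \<noteq> [] \<and> last h \<in> V \<and> is_P2 (last h)"
      show "set_pmf (\<sigma>2 h) \<subseteq> succ (last h)"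
      proof (cases "3 < length h \<and> take 3 h = pre")
        case True
        then have "drop 3 h \<noteq> []" "last (drop 3 h) = last h"
          by auto
        then have "set_pmf (\<sigma>2' (drop 3 h)) \<subseteq> succ (last h)"
          using \<sigma>2' h unfolding tb_strategy_def by metis
        then show ?thesis using True by (simp add: \<sigma>2_def)
      next
        case False
        then show ?thesis using h \<sigma>2' move2 by (auto simp: \<sigma>2_def tb_strategy_def)
      qed
    qed
    have shift: "tb_safe_steps succ Fb ?\<sigma>1 \<sigma>2 n [P1 s, P2 s A B, Rnd s A b, x]
                 = tb_safe_steps succ Fb ?\<sigma>1 \<sigma>2' n [x]" for n x
    proof -
      have "tb_safe_steps succ Fb ?\<sigma>1 \<sigma>2 n (pre @ [x]) = tb_safe_steps succ Fb ?\<sigma>1 \<sigma>2' n [x]"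
        by (rule tb_safe_steps_append_prefix) (auto simp: \<sigma>2_def pre_def pure_memoryless_def)
      then show ?thesis by (simp add: pre_def)
    qed
    have "measure_pmf.expectation (pmf_of_set ?T) (\<lambda>x. tb_safe_steps succ Fb ?\<sigma>1 \<sigma>2' n [x]) = 1"
      for n
    proof -
      have "tb_prob_safe succ Fb ?\<sigma>1 \<sigma>2 (P1 s) = 1"
        using win sW \<sigma>2 by (simp add: tb_as_winning_from_def)
      then have "tb_safe_steps succ Fb ?\<sigma>1 \<sigma>2 (Suc (Suc (Suc n))) [P1 s] = 1"
        by (rule tb_safe_steps_eq_1_if_prob_safe)
      then show ?thesis
        by (simp add: tb_next_def pure_memoryless_def f \<sigma>2_def pre_def shift split: if_splits)
    qed
    moreover have "t \<in> set_pmf (pmf_of_set ?T)"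
      using t fin by (subst set_pmf_of_set) auto
    ultimately have "tb_safe_steps succ Fb ?\<sigma>1 \<sigma>2' n [t] = 1" for n
      using measure_pmf_expectation_eq_1_imp[where f = "\<lambda>x. tb_safe_steps succ Fb ?\<sigma>1 \<sigma>2' n [x]"]
        tb_safe_steps_bounds by blast
    then show ?thesis by (simp add: tb_prob_safe_def)
  qed
  moreover have "tb_strategy V is_P1 succ ?\<sigma>1"
    using win by (simp add: tb_as_winning_from_def)
  ultimately show ?thesis
    using t unfolding W_def tb_as_win_set_def tb_as_winning_from_def by blast
qed

theorem lemma12:
  fixes S :: "'s set" and M :: "'m set"
    and \<Gamma>1 \<Gamma>2 :: "'s \<Rightarrow> 'm set" and \<delta> :: "'s \<Rightarrow> 'm \<Rightarrow> 'm \<Rightarrow> 's pmf"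
    and F :: "'s set" and v :: "'s \<Rightarrow> real"
    and f1 :: "('s, 'm) tbv \<Rightarrow> ('s, 'm) tbv"
    and \<pi>1 :: "'s \<Rightarrow> 'm pmf" and \<pi>2 :: "'s \<Rightarrow> 'm"
  assumes G: "cgs S M \<Gamma>1 \<Gamma>2 \<delta>"
    and F: "F \<subseteq> S"
    and v: "\<forall>s\<in>S. 0 \<le> v s \<and> v s \<le> 1"
    and f1_move: "\<forall>x \<in> TB_states S \<Gamma>1 \<Gamma>2 \<delta> v. is_P1 x \<longrightarrow> f1 x \<in> TB_succ S \<Gamma>1 \<Gamma>2 \<delta> v x"
    and f1_win: "tb_as_winning_from (TB_states S \<Gamma>1 \<Gamma>2 \<delta> v) (TB_succ S \<Gamma>1 \<Gamma>2 \<delta> v) (TB_safe F) (pure_memoryless f1)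
                   (tb_as_win_set (TB_states S \<Gamma>1 \<Gamma>2 \<delta> v) (TB_succ S \<Gamma>1 \<Gamma>2 \<delta> v) (TB_safe F))"
    and \<pi>1_sel: "\<forall>s\<in>S. set_pmf (\<pi>1 s) \<subseteq> \<Gamma>1 s"
    and \<pi>1_TB: "\<forall>s\<in>S. P1 s \<in> tb_as_win_set (TB_states S \<Gamma>1 \<Gamma>2 \<delta> v) (TB_succ S \<Gamma>1 \<Gamma>2 \<delta> v) (TB_safe F) \<longrightarrow>
                 (\<forall>A B. f1 (P1 s) = P2 s A B \<longrightarrow>
                    \<pi>1 s \<in> OptSel S \<Gamma>1 \<Gamma>2 \<delta> v s \<and> set_pmf (\<pi>1 s) = A \<and>
                    CountOpt S \<Gamma>1 \<Gamma>2 \<delta> v s (\<pi>1 s) = B)"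
    and \<pi>2_sel: "\<forall>s\<in>S. \<pi>2 s \<in> \<Gamma>2 s"
    and \<pi>2_opt: "\<forall>s\<in>S. P1 s \<in> tb_as_win_set (TB_states S \<Gamma>1 \<Gamma>2 \<delta> v) (TB_succ S \<Gamma>1 \<Gamma>2 \<delta> v) (TB_safe F) \<longrightarrow>
                 \<pi>2 s \<in> CountOpt S \<Gamma>1 \<Gamma>2 \<delta> v s (\<pi>1 s)"
  shows "\<forall>s\<in>S. P1 s \<in> tb_as_win_set (TB_states S \<Gamma>1 \<Gamma>2 \<delta> v) (TB_succ S \<Gamma>1 \<Gamma>2 \<delta> v) (TB_safe F) \<longrightarrow>
           prob_safe_cgs \<delta> F \<pi>1 \<pi>2 s = 1"
proof -
  let ?V = "TB_states S \<Gamma>1 \<Gamma>2 \<delta> v" and ?succ = "TB_succ S \<Gamma>1 \<Gamma>2 \<delta> v"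
  let ?W = "tb_as_win_set ?V ?succ (TB_safe F)"
  have fin: "finite S"
    using G by (simp add: cgs_def)
  \<comment> \<open>Some legal player-2 strategy exists (the CountOpt sets of optimal selectors are
    nonempty); without one, almost-sure winning would be vacuous and say nothing about F.\<close>
  obtain \<sigma>0 where \<sigma>0: "tb_strategy ?V is_P2 ?succ \<sigma>0"
    using tb_strategy_exists[of ?V is_P2 ?succ] TB_succ_P2_nonempty[OF G] by blast
  define C where "C = {s \<in> S. P1 s \<in> ?W}"
  have "C \<subseteq> F"
    using tb_as_winning_from_imp_safe[OF f1_win _ \<sigma>0] by (auto simp: C_def TB_safe_def)
  moreover have "set_pmf (bind_pmf (\<pi>1 s) (\<lambda>a. \<delta> s a (\<pi>2 s))) \<subseteq> C" if "s \<in> C" for s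
  proof
    fix t assume t: "t \<in> set_pmf (bind_pmf (\<pi>1 s) (\<lambda>a. \<delta> s a (\<pi>2 s)))"
    from that have s: "s \<in> S" and sW: "P1 s \<in> ?W" by (auto simp: C_def)
    then have "f1 (P1 s) \<in> ?succ (P1 s)"
      using f1_move by (auto simp: tb_as_win_set_def)
    then obtain A B where f1s: "f1 (P1 s) = P2 s A B" by auto
    with \<pi>1_TB \<pi>2_opt s sW have A: "set_pmf (\<pi>1 s) = A" and b: "\<pi>2 s \<in> B" by auto
    from t A have tT: "P1 t \<in> ?succ (Rnd s A (\<pi>2 s))" by (auto simp: Dest_def)
    have "A \<subseteq> \<Gamma>1 s" "\<pi>2 s \<in> \<Gamma>2 s"
      using \<pi>1_sel \<pi>2_sel s A by auto
    then have succ_S: "?succ (Rnd s A (\<pi>2 s)) \<subseteq> P1 ` S"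
      by (rule TB_succ_Rnd_subset[OF G s])
    with tT have tS: "t \<in> S" by auto
    from succ_S have "finite (?succ (Rnd s A (\<pi>2 s)))"
      using finite_subset fin by blast
    with tT tS b have "P1 t \<in> ?W"
      by (intro tb_as_win_set_closed_random_successor[OF f1_win sW f1s])
        (auto simp: TB_states_def)
    with tS show "t \<in> C" by (simp add: C_def)
  qed
  ultimately show ?thesis
    using prob_safe_cgs_eq_1_on_closed_set[of C F \<pi>1 \<delta> \<pi>2] by (simp add: C_def)
qed

end
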